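(* Let $(E,\|\cdot\|)$ be a real Banach space, $I=[a,b]$ a closed real interval, $E_0=C(I,E)$ the space of continuous functions $\varphi:I\to E$ with the supremum norm $\|\varphi\|_0=\sup\{\|\varphi(t)\|: t\in I\}$, fix $c\in I$, and let $\mathcal{R}_c=\{\varphi\in E_0: \|\varphi\|_0=\|\varphi(c)\|\}$. The following are equivalent: (a) $\mathcal{R}_c$ is algebraically closed, i.e. $\varphi,\xi\in\mathcal{R}_c$ implies $\varphi-\xi\in\mathcal{R}_c$; (b) $\mathcal{R}_c$ is additive, i.e. $\varphi,\psi\in\mathcal{R}_c$ implies $\varphi+\psi\in\mathcal{R}_c$; (c) $\mathcal{R}_c$ is a linear subspace of $E_0$. *)

theory Defs
  imports "HOL-Analysis.Analysis"
begin

definition E0 :: "real \<Rightarrow> real \<Rightarrow> (real \<Rightarrow> 'e::real_normed_vector) set" where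
  "E0 a b = {f. continuous_on {a..b} f}"

definition norm0 :: "real \<Rightarrow> real \<Rightarrow> (real \<Rightarrow> 'e::real_normed_vector) \<Rightarrow> real" where
  "norm0 a b f = (SUP t\<in>{a..b}. norm (f t))"

definition Rc :: "real \<Rightarrow> real \<Rightarrow> real \<Rightarrow> (real \<Rightarrow> 'e::real_normed_vector) set" where
  "Rc a b c = {f \<in> E0 a b. norm0 a b f = norm (f c)}"

definition fun_subspace :: "('x \<Rightarrow> 'e::real_vector) set \<Rightarrow> bool" where
  "fun_subspace S \<longleftrightarrow> (\<lambda>t. 0) \<in> S
     \<and> (\<forall>f\<in>S. \<forall>g\<in>S. (\<lambda>t. f t + g t) \<in> S)
     \<and> (\<forall>r::real. \<forall>f\<in>S. (\<lambda>t. r *\<^sub>R f t) \<in> S)"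

end

theory Submission
  imports Defs
begin

text \<open>If the interval is a single point or E is trivial, every continuous function attains its
  norm at c, so R_c = E0 and all three properties hold. Otherwise, for a < b and v \<noteq> 0, the
  constant v and the function t \<mapsto> (|t - c|/(b - a) - 1) v both attain their norm at c, but
  their sum t \<mapsto> |t - c|/(b - a) v vanishes at c and nowhere else. Since R_c is closed under
  negation, this also refutes closure under differences.\<close>

lemma mem_Rc_iff:
  fixes f :: "real \<Rightarrow> 'e::real_normed_vector"
  assumes c: "c \<in> {a..b}"
  shows "f \<in> Rc a b c \<longleftrightarrow> continuous_on {a..b} f \<and> (\<forall>t\<in>{a..b}. norm (f t) \<le> norm (f c))"
proof (cases "continuous_on {a..b} f")
  case True
  have "compact ((\<lambda>t. norm (f t)) ` {a..b})"
    by (intro compact_continuous_image continuous_on_norm True) simp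
  hence bdd: "bdd_above ((\<lambda>t. norm (f t)) ` {a..b})"
    by (simp add: bounded_imp_bdd_above compact_imp_bounded)
  have "(SUP t\<in>{a..b}. norm (f t)) = norm (f c) \<longleftrightarrow> (\<forall>t\<in>{a..b}. norm (f t) \<le> norm (f c))"
    using c by (metis (no_types, lifting) antisym cSUP_least cSUP_upper bdd empty_iff)
  with True show ?thesis by (simp add: Rc_def norm0_def E0_def)
qed (simp add: Rc_def E0_def)

lemma scaleR_mem_Rc:
  assumes "c \<in> {a..b}" and "f \<in> Rc a b c"
  shows "(\<lambda>t. r *\<^sub>R f t) \<in> Rc a b c"
  using assms by (simp add: mem_Rc_iff mult_left_mono continuous_intros)

lemma uminus_mem_Rc:
  assumes "c \<in> {a..b}" and "f \<in> Rc a b c"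
  shows "(\<lambda>t. - f t) \<in> Rc a b c"
  using scaleR_mem_Rc[OF assms, of "-1"] by simp

lemma add_closed_if_diff_closed:
  fixes S :: "('x \<Rightarrow> 'e::ab_group_add) set"
  assumes "\<forall>f\<in>S. (\<lambda>t. - f t) \<in> S" and "\<forall>\<phi>\<in>S. \<forall>\<xi>\<in>S. (\<lambda>t. \<phi> t - \<xi> t) \<in> S"
  shows "\<forall>\<phi>\<in>S. \<forall>\<psi>\<in>S. (\<lambda>t. \<phi> t + \<psi> t) \<in> S"
proof (intro ballI)
  fix \<phi> \<psi> assume "\<phi> \<in> S" "\<psi> \<in> S"
  from bspec[OF bspec[OF assms(2) \<open>\<phi> \<in> S\<close>] bspec[OF assms(1) \<open>\<psi> \<in> S\<close>]]
  show "(\<lambda>t. \<phi> t + \<psi> t) \<in> S"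
    by simp
qed

lemma fun_subspace_E0: "fun_subspace (E0 a b)"
  by (auto simp: fun_subspace_def E0_def intro!: continuous_intros)

lemma Rc_eq_E0:
  fixes a b c :: real
  assumes "c \<in> {a..b}" and "{a..b} = {c} \<or> (\<forall>v::'e::real_normed_vector. v = 0)"
  shows "(Rc a b c :: (real \<Rightarrow> 'e) set) = E0 a b"
proof -
  have "norm (f t) \<le> norm (f c)" if "t \<in> {a..b}" for f :: "real \<Rightarrow> 'e" and t
    using assms that by (metis order_refl singletonD)
  then show ?thesis
    using assms(1) by (auto simp: mem_Rc_iff E0_def)
qed

lemma Rc_not_closed_under_add:
  fixes v :: "'e::real_normed_vector"
  assumes c: "c \<in> {a..b}" and "a < b" and "v \<noteq> 0"
  shows "\<exists>\<phi>\<in>Rc a b c. \<exists>\<psi>\<in>Rc a b c. (\<lambda>t. \<phi> t + \<psi> t :: 'e) \<notin> Rc a b c"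
proof -
  define h where "h t = \<bar>t - c\<bar> / (b - a)" for t
  have h_le: "h t \<le> 1" if "t \<in> {a..b}" for t
    using that c \<open>a < b\<close> by (auto simp: h_def abs_le_iff)
  have "continuous_on {a..b} h"
    unfolding h_def using \<open>a < b\<close> by (intro continuous_intros) simp
  moreover have "norm ((h t - 1) *\<^sub>R v) \<le> norm v" if "t \<in> {a..b}" for t
  proof -
    have "\<bar>h t - 1\<bar> \<le> 1"
      using h_le[OF that] \<open>a < b\<close> by (simp add: h_def)
    then show ?thesis
      by (simp add: mult_left_le_one_le)
  qed
  ultimately have tent: "(\<lambda>t. (h t - 1) *\<^sub>R v) \<in> Rc a b c"
    using c by (simp add: mem_Rc_iff h_def continuous_intros)
  have const: "(\<lambda>t. v) \<in> Rc a b c"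
    using c by (simp add: mem_Rc_iff)
  have sum_notin: "(\<lambda>t. v + (h t - 1) *\<^sub>R v) \<notin> Rc a b c"
  proof
    define t0 where "t0 = (if c = a then b else a)"
    have "t0 \<in> {a..b}" "h t0 \<noteq> 0"
      using c \<open>a < b\<close> by (auto simp: t0_def h_def)
    moreover assume "(\<lambda>t. v + (h t - 1) *\<^sub>R v) \<in> Rc a b c"
    ultimately have "norm (h t0 *\<^sub>R v) \<le> norm (h c *\<^sub>R v)"
      using c by (auto simp: mem_Rc_iff algebra_simps)
    with \<open>h t0 \<noteq> 0\<close> \<open>v \<noteq> 0\<close> show False
      by (simp add: h_def mult_le_0_iff)
  qed
  show ?thesis
    using sum_notin by (intro bexI[OF _ const] bexI[OF _ tent])
qed

theorem lemma2:
  fixes a b c :: real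
  assumes "c \<in> {a..b}"
  defines "R \<equiv> (Rc a b c :: (real \<Rightarrow> 'e::banach) set)"
  shows "((\<forall>\<phi>\<in>R. \<forall>\<xi>\<in>R. (\<lambda>t. \<phi> t - \<xi> t) \<in> R)
           \<longleftrightarrow> (\<forall>\<phi>\<in>R. \<forall>\<psi>\<in>R. (\<lambda>t. \<phi> t + \<psi> t) \<in> R))
       \<and> ((\<forall>\<phi>\<in>R. \<forall>\<psi>\<in>R. (\<lambda>t. \<phi> t + \<psi> t) \<in> R)
           \<longleftrightarrow> fun_subspace R)"
proof (cases "{a..b} = {c} \<or> (\<forall>v::'e. v = 0)")
  case True
  then have "R = E0 a b"
    unfolding R_def using Rc_eq_E0[OF assms(1)] by blast
  then have subspace: "fun_subspace R"
    using fun_subspace_E0 by simp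
  then have add: "\<forall>\<phi>\<in>R. \<forall>\<psi>\<in>R. (\<lambda>t. \<phi> t + \<psi> t) \<in> R"
    by (simp add: fun_subspace_def)
  have diff: "\<forall>\<phi>\<in>R. \<forall>\<xi>\<in>R. (\<lambda>t. \<phi> t - \<xi> t) \<in> R"
    using \<open>R = E0 a b\<close> by (simp add: E0_def continuous_on_diff)
  show ?thesis
    using subspace add diff by simp
next
  case False
  then obtain v :: 'e where "v \<noteq> 0"
    by blast
  moreover have "a < b"
    using False assms(1) by (cases "a < b") auto
  ultimately have not_add: "\<not> (\<forall>\<phi>\<in>R. \<forall>\<psi>\<in>R. (\<lambda>t. \<phi> t + \<psi> t) \<in> R)"
    using Rc_not_closed_under_add[OF assms(1)] unfolding R_def by blast
  then have not_subspace: "\<not> fun_subspace R"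
    by (simp add: fun_subspace_def)
  have "\<forall>f\<in>R. (\<lambda>t. - f t) \<in> R"
    using uminus_mem_Rc[OF assms(1)] unfolding R_def by blast
  with not_add have not_diff: "\<not> (\<forall>\<phi>\<in>R. \<forall>\<xi>\<in>R. (\<lambda>t. \<phi> t - \<xi> t) \<in> R)"
    using add_closed_if_diff_closed by blast
  show ?thesis
    by (simp only: not_add not_subspace not_diff simp_thms)
qed

end
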